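(* Let $(X,\mathcal{B})$ be a $t$-$(v,k,1)$-design (with $2\le t<k<v$) and let $B \in \mathcal{B}$. Let $p$ be the probability that a block is available and $q = 1-p$. Then \[\mathcal{R}(p) = 1 + \sum_{i=1}^{k} (-1)^{i}\binom{k}{i} q^{e_i},\] where $r_j = \binom{v-j}{t-j}\big/\binom{k-j}{t-j}$ for $1 \le j \le t$, and \[e_i = \sum_{j=1}^{\min\{i,t-1\}} (-1)^{j+1}\binom{i}{j}(r_j - 1), \quad 1 \le i \le k.\]
   Context: A $t$-$(v,k,\lambda)$-design is a set $X$ of $v$ points together with a collection $\mathcal{B}$ of $k$-subsets of $X$ (blocks) such that every $t$-subset of $X$ lies in exactly $\lambda$ blocks; for $\lambda=1$, $r_j$ as given is the number of blocks containing any fixed set of $j$ points. Reliability model: fix a block $B\in\mathcal{B}$. A repair set for $B$ is a subset $\mathcal{P}\subseteq \mathcal{B}\setminus\{B\}$ with $B \subseteq \bigcup_{B'\in\mathcal{P}} B'$. Each block of $\mathcal{B}\setminus\{B\}$ is, independently of the others, available with probability $p\in[0,1]$; a repair set is available if all of its blocks are available. $\mathcal{R}(p)$ is the probability that at least one available repair set for $B$ exists. *)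

theory Defs
  imports Complex_Main
begin

definition t_design :: "'a set \<Rightarrow> 'a set set \<Rightarrow> nat \<Rightarrow> nat \<Rightarrow> nat \<Rightarrow> nat \<Rightarrow> bool" where
  "t_design X Bs t v k lam \<longleftrightarrow>
     finite X \<and> card X = v \<and>
     (\<forall>B\<in>Bs. B \<subseteq> X \<and> card B = k) \<and>
     (\<forall>T. T \<subseteq> X \<longrightarrow> card T = t \<longrightarrow> card {B\<in>Bs. T \<subseteq> B} = lam)"

definition repair_set :: "'a set set \<Rightarrow> 'a set \<Rightarrow> 'a set set \<Rightarrow> bool" where
  "repair_set Bs B P \<longleftrightarrow> P \<subseteq> Bs - {B} \<and> B \<subseteq> \<Union>P"

text \<open>Reliability: each block of Bs - {B} is independently available with probability p;
  the probability that the (random) set A of available blocks contains some repair set.\<close>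
definition reliability :: "'a set set \<Rightarrow> 'a set \<Rightarrow> real \<Rightarrow> real" where
  "reliability Bs B p =
     (\<Sum>A\<in>Pow (Bs - {B}).
        p ^ card A * (1 - p) ^ card (Bs - {B} - A) *
        (if \<exists>P. P \<subseteq> A \<and> repair_set Bs B P then 1 else 0))"

definition r_num :: "nat \<Rightarrow> nat \<Rightarrow> nat \<Rightarrow> nat \<Rightarrow> real" where
  "r_num v k t j = real ((v - j) choose (t - j)) / real ((k - j) choose (t - j))"

definition e_exp :: "nat \<Rightarrow> nat \<Rightarrow> nat \<Rightarrow> nat \<Rightarrow> real" where
  "e_exp v k t i = (\<Sum>j=1..min i (t - 1). (-1) ^ (j + 1) * real (i choose j) * (r_num v k t j - 1))"

end

theory Submission
  imports Defs
begin

text \<open>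
  A repair set exists iff the available blocks cover \<open>B\<close>. Inclusion-exclusion over the
  points \<open>S \<subseteq> B\<close> left uncovered writes \<open>\<R>(p)\<close> as the sum of
  \<open>(-1)\<^bsup>|S|\<^esup> q\<^bsup>m(S)\<^esup>\<close>, where \<open>m(S)\<close> is the number of blocks other than \<open>B\<close>
  meeting \<open>S\<close>: all of them are unavailable with probability \<open>q\<^bsup>m(S)\<^esup>\<close>.
  By double counting, in a Steiner system the blocks other than \<open>B\<close> through a
  \<open>j\<close>-subset of \<open>B\<close> number \<open>r\<^sub>j - 1\<close>, and none for \<open>j \<ge> t\<close>; a second
  inclusion-exclusion gives \<open>m(S) = e\<^bsub>|S|\<^esub>\<close>, and grouping the sets \<open>S\<close> by size
  yields the formula. As every point lies on \<open>r\<^sub>1 \<ge> 2\<close> blocks, \<open>m(S) > 0\<close> for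
  \<open>S \<noteq> {}\<close>, so \<open>q\<^bsup>m(S)\<^esup> = q powr e\<^bsub>|S|\<^esub>\<close> even for \<open>q = 0\<close>.
\<close>

lemma sum_Pow_card_eq_sum_binomial:
  fixes f :: "nat \<Rightarrow> 'b::comm_semiring_1"
  assumes "finite S"
  shows "(\<Sum>J\<in>Pow S. f (card J)) = (\<Sum>j=0..card S. of_nat (card S choose j) * f j)"
proof -
  have "(\<Sum>J\<in>Pow S. f (card J)) = (\<Sum>j=0..card S. \<Sum>J\<in>{J\<in>Pow S. card J = j}. f (card J))"
    by (rule sum.group[symmetric]) (auto simp: assms card_mono)
  also have "\<dots> = (\<Sum>j=0..card S. of_nat (card S choose j) * f j)"
  proof (rule sum.cong[OF refl])
    fix j
    have "(\<Sum>J\<in>{J\<in>Pow S. card J = j}. f (card J)) = (\<Sum>J\<in>{J. J \<subseteq> S \<and> card J = j}. f j)"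
      by (rule sum.cong) auto
    then show "(\<Sum>J\<in>{J\<in>Pow S. card J = j}. f (card J)) = of_nat (card S choose j) * f j"
      by (simp add: n_subsets[OF assms])
  qed
  finally show ?thesis .
qed

lemma sum_Pow_neg_one_power_card:
  assumes "finite U"
  shows "(\<Sum>X\<in>Pow U. (-1::'a::comm_ring_1) ^ card X) = (if U = {} then 1 else 0)"
proof -
  have "(\<Sum>X\<in>Pow U. (-1::'a) ^ card X) = 0 ^ card U"
    using prod_diff_conv_sum[OF assms, of "\<lambda>_. 1::'a" "\<lambda>_. 1"] by simp
  with assms show ?thesis by (simp add: power_0_left)
qed

lemma sum_Pow_binomial_weights:
  fixes p q :: "'a::comm_semiring_1"
  assumes "finite U"
  shows "(\<Sum>A\<in>Pow U. p ^ card A * q ^ card (U - A)) = (p + q) ^ card U"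
  using prod_add[OF assms, of "\<lambda>_. p" "\<lambda>_. q"] by simp

lemma sum_Pow_weights_avoiding:
  fixes p q :: "'a::comm_semiring_1"
  assumes "finite U" "M \<subseteq> U" "p + q = 1"
  shows "(\<Sum>A\<in>Pow U. if A \<inter> M = {} then p ^ card A * q ^ card (U - A) else 0) = q ^ card M"
proof -
  have "{A\<in>Pow U. A \<inter> M = {}} = Pow (U - M)" by auto
  then have "(\<Sum>A\<in>Pow U. if A \<inter> M = {} then p ^ card A * q ^ card (U - A) else 0)
      = (\<Sum>A\<in>Pow (U - M). p ^ card A * q ^ card (U - A))"
    using assms(1) by (simp add: sum.inter_filter[symmetric])
  also have "\<dots> = (\<Sum>A\<in>Pow (U - M). q ^ card M * (p ^ card A * q ^ card (U - M - A)))"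
  proof (rule sum.cong[OF refl])
    fix A assume "A \<in> Pow (U - M)"
    then have "U - A = (U - M - A) \<union> M" and "finite (U - M - A)" "finite M" "(U - M - A) \<inter> M = {}"
      using assms finite_subset by auto
    then show "p ^ card A * q ^ card (U - A) = q ^ card M * (p ^ card A * q ^ card (U - M - A))"
      by (simp add: card_Un_disjoint power_add mult_ac)
  qed
  also have "\<dots> = q ^ card M"
    using assms by (simp add: sum_distrib_left[symmetric] sum_Pow_binomial_weights)
  finally show ?thesis .
qed

lemma indicator_subset_eq_sum_Pow:
  assumes "finite B"
  shows "(if B \<subseteq> U then 1 else 0) =
    (\<Sum>S\<in>Pow B. if S \<inter> U = {} then (-1::'a::comm_ring_1) ^ card S else 0)"
proof -
  have "{S\<in>Pow B. S \<inter> U = {}} = Pow (B - U)" by auto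
  then have "(\<Sum>S\<in>Pow B. if S \<inter> U = {} then (-1::'a) ^ card S else 0)
      = (\<Sum>S\<in>Pow (B - U). (-1) ^ card S)"
    using assms by (simp add: sum.inter_filter[symmetric])
  also have "\<dots> = (if B \<subseteq> U then 1 else 0)"
    using assms by (simp add: sum_Pow_neg_one_power_card)
  finally show ?thesis ..
qed

definition blocks_meeting :: "'a set set \<Rightarrow> 'a set \<Rightarrow> 'a set \<Rightarrow> 'a set set" where
  "blocks_meeting Bs B S = {C\<in>Bs - {B}. C \<inter> S \<noteq> {}}"

lemma ex_repair_set_iff_covers:
  assumes "A \<subseteq> Bs - {B}"
  shows "(\<exists>P. P \<subseteq> A \<and> repair_set Bs B P) \<longleftrightarrow> B \<subseteq> \<Union>A"
  using assms unfolding repair_set_def by blast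

lemma reliability_eq_sum_Pow_blocks_meeting:
  assumes "finite Bs" "finite B"
  shows "reliability Bs B p = (\<Sum>S\<in>Pow B. (-1) ^ card S * (1 - p) ^ card (blocks_meeting Bs B S))"
proof -
  define U where "U = Bs - {B}"
  define w where "w A = p ^ card A * (1 - p) ^ card (U - A)" for A
  have fin: "finite U" using assms(1) by (simp add: U_def)
  have "reliability Bs B p = (\<Sum>A\<in>Pow U. w A * (if B \<subseteq> \<Union>A then 1 else 0))"
    unfolding reliability_def U_def w_def by (intro sum.cong refl) (simp add: ex_repair_set_iff_covers)
  also have "\<dots> = (\<Sum>A\<in>Pow U. \<Sum>S\<in>Pow B. (-1) ^ card S * (if A \<inter> blocks_meeting Bs B S = {} then w A else 0))"
  proof (rule sum.cong[OF refl])
    fix A assume "A \<in> Pow U"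
    then have "A \<inter> blocks_meeting Bs B S = {} \<longleftrightarrow> S \<inter> \<Union>A = {}" for S
      unfolding blocks_meeting_def U_def by blast
    then show "w A * (if B \<subseteq> \<Union>A then 1 else 0)
        = (\<Sum>S\<in>Pow B. (-1) ^ card S * (if A \<inter> blocks_meeting Bs B S = {} then w A else 0))"
      by (simp add: indicator_subset_eq_sum_Pow[OF assms(2)] sum_distrib_left if_distrib mult.commute cong: if_cong)
  qed
  also have "\<dots> = (\<Sum>S\<in>Pow B. (-1) ^ card S * (\<Sum>A\<in>Pow U. if A \<inter> blocks_meeting Bs B S = {} then w A else 0))"
    by (subst sum.swap) (simp add: sum_distrib_left)
  also have "\<dots> = (\<Sum>S\<in>Pow B. (-1) ^ card S * (1 - p) ^ card (blocks_meeting Bs B S))"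
    unfolding w_def using fin
    by (intro sum.cong refl arg_cong2[where f="(*)"] sum_Pow_weights_avoiding) (auto simp: blocks_meeting_def U_def)
  finally show ?thesis .
qed

lemma t_design_block:
  assumes "t_design X Bs t v k lam" "C \<in> Bs"
  shows "C \<subseteq> X" "card C = k" "finite C"
  using assms finite_subset unfolding t_design_def by auto

lemma t_design_finite_blocks:
  assumes "t_design X Bs t v k lam"
  shows "finite Bs"
proof (rule finite_subset)
  show "Bs \<subseteq> Pow X" using t_design_block[OF assms] by blast
  show "finite (Pow X)" using assms unfolding t_design_def by simp
qed

lemma card_supersets_with_card:
  assumes "finite Y" "J \<subseteq> Y" "card J \<le> t"
  shows "card {T. J \<subseteq> T \<and> T \<subseteq> Y \<and> card T = t} = (card Y - card J) choose (t - card J)"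
proof -
  have fJ: "finite J" using assms finite_subset by blast
  have "{T. J \<subseteq> T \<and> T \<subseteq> Y \<and> card T = t} = (\<lambda>U. U \<union> J) ` {U. U \<subseteq> Y - J \<and> card U = t - card J}"
  proof (intro equalityI subsetI)
    fix T assume "T \<in> {T. J \<subseteq> T \<and> T \<subseteq> Y \<and> card T = t}"
    then have "T = (T - J) \<union> J" "T - J \<subseteq> Y - J" "card (T - J) = t - card J"
      using fJ by (auto simp: card_Diff_subset)
    then show "T \<in> (\<lambda>U. U \<union> J) ` {U. U \<subseteq> Y - J \<and> card U = t - card J}" by blast
  next
    fix T assume "T \<in> (\<lambda>U. U \<union> J) ` {U. U \<subseteq> Y - J \<and> card U = t - card J}"
    then obtain U where "T = U \<union> J" "U \<subseteq> Y - J" "card U = t - card J" by blast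
    moreover have "card (U \<union> J) = card U + card J"
      using \<open>U \<subseteq> Y - J\<close> assms(1) fJ by (intro card_Un_disjoint) (auto intro: finite_subset)
    ultimately show "T \<in> {T. J \<subseteq> T \<and> T \<subseteq> Y \<and> card T = t}"
      using assms by auto
  qed
  moreover have "inj_on (\<lambda>U. U \<union> J) {U. U \<subseteq> Y - J \<and> card U = t - card J}"
    by (rule inj_onI) blast
  ultimately have "card {T. J \<subseteq> T \<and> T \<subseteq> Y \<and> card T = t} = card {U. U \<subseteq> Y - J \<and> card U = t - card J}"
    by (simp add: card_image)
  also have "\<dots> = (card Y - card J) choose (t - card J)"
    using assms by (simp add: n_subsets card_Diff_subset fJ)
  finally show ?thesis .
qed

lemma t_design_card_blocks_containing:
  assumes des: "t_design X Bs t v k lam" and J: "J \<subseteq> X" "card J \<le> t"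
  shows "card {C\<in>Bs. J \<subseteq> C} * ((k - card J) choose (t - card J))
    = lam * ((v - card J) choose (t - card J))"
proof -
  define Ts where "Ts = {T. J \<subseteq> T \<and> T \<subseteq> X \<and> card T = t}"
  have finX: "finite X" and cardX: "card X = v"
    and lam: "\<And>T. T \<subseteq> X \<Longrightarrow> card T = t \<Longrightarrow> card {C\<in>Bs. T \<subseteq> C} = lam"
    using des unfolding t_design_def by auto
  have finTs: "finite Ts" unfolding Ts_def using finX by (auto intro: finite_subset[of _ "Pow X"])
  have finBs: "finite {C\<in>Bs. J \<subseteq> C}" using t_design_finite_blocks[OF des] by simp
  have "card {C\<in>Bs. J \<subseteq> C} * ((k - card J) choose (t - card J)) = (\<Sum>C\<in>{C\<in>Bs. J \<subseteq> C}. card {T\<in>Ts. T \<subseteq> C})"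
  proof -
    have "card {T\<in>Ts. T \<subseteq> C} = (k - card J) choose (t - card J)" if "C \<in> Bs" "J \<subseteq> C" for C
    proof -
      have "{T\<in>Ts. T \<subseteq> C} = {T. J \<subseteq> T \<and> T \<subseteq> C \<and> card T = t}"
        using t_design_block(1)[OF des \<open>C \<in> Bs\<close>] unfolding Ts_def by blast
      then show ?thesis
        using card_supersets_with_card[of C J t] t_design_block[OF des \<open>C \<in> Bs\<close>] that J by simp
    qed
    then show ?thesis by simp
  qed
  also have "\<dots> = (\<Sum>T\<in>Ts. card {C\<in>{C\<in>Bs. J \<subseteq> C}. T \<subseteq> C})"
    using sum.swap_restrict[OF finBs finTs, of "\<lambda>_ _. 1::nat" "\<lambda>C T. T \<subseteq> C"] by simp
  also have "\<dots> = (\<Sum>T\<in>Ts. lam)"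
  proof (rule sum.cong[OF refl])
    fix T assume "T \<in> Ts"
    then have "{C\<in>{C\<in>Bs. J \<subseteq> C}. T \<subseteq> C} = {C\<in>Bs. T \<subseteq> C}" "T \<subseteq> X" "card T = t"
      unfolding Ts_def by auto
    then show "card {C\<in>{C\<in>Bs. J \<subseteq> C}. T \<subseteq> C} = lam" using lam by simp
  qed
  also have "\<dots> = lam * ((v - card J) choose (t - card J))"
    using card_supersets_with_card[OF finX J] cardX by (simp add: Ts_def)
  finally show ?thesis .
qed

lemma card_other_blocks_containing:
  assumes des: "t_design X Bs t v k 1" and "t \<le> k" "B \<in> Bs" "J \<subseteq> B"
  shows "real (card {C\<in>Bs - {B}. J \<subseteq> C}) = r_num v k t (card J) - 1"
proof -
  have J: "J \<subseteq> X" using t_design_block(1)[OF des \<open>B \<in> Bs\<close>] \<open>J \<subseteq> B\<close> by blast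
  have fin: "finite {C\<in>Bs. J \<subseteq> C}" using t_design_finite_blocks[OF des] by simp
  have B: "B \<in> {C\<in>Bs. J \<subseteq> C}" using assms by blast
  have other: "{C\<in>Bs - {B}. J \<subseteq> C} = {C\<in>Bs. J \<subseteq> C} - {B}" by blast
  show ?thesis
  proof (cases "card J \<le> t")
    case True
    have "0 < (k - card J) choose (t - card J)" using True \<open>t \<le> k\<close> by simp
    moreover have "card {C\<in>Bs. J \<subseteq> C} * ((k - card J) choose (t - card J)) = (v - card J) choose (t - card J)"
      using t_design_card_blocks_containing[OF des J True] by simp
    ultimately have "real (card {C\<in>Bs. J \<subseteq> C}) = r_num v k t (card J)"
      unfolding r_num_def by (simp add: field_simps flip: of_nat_mult)
    moreover have "1 \<le> card {C\<in>Bs. J \<subseteq> C}" using B fin by (auto simp: Suc_le_eq card_gt_0_iff)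
    ultimately show ?thesis
      unfolding other using B fin by (simp add: card_Diff_singleton of_nat_diff)
  next
    case False
    then obtain T where T: "T \<subseteq> J" "card T = t"
      by (meson nat_le_linear obtain_subset_with_card_n)
    then have "card {C\<in>Bs. T \<subseteq> C} = 1"
      using des J unfolding t_design_def by auto
    moreover have "B \<in> {C\<in>Bs. T \<subseteq> C}" using B T by blast
    ultimately have "{C\<in>Bs. T \<subseteq> C} = {B}" by (metis card_1_singletonE singletonD)
    then have none: "{C\<in>Bs - {B}. J \<subseteq> C} = {}" using T by blast
    txt \<open>Here \<open>t - card J = 0\<close> by truncated subtraction, so \<open>r_num\<close> is \<open>1\<close>.\<close>
    have "r_num v k t (card J) = 1" using False unfolding r_num_def by simp
    then show ?thesis unfolding none by simp
  qed
qed

lemma card_blocks_meeting: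
  assumes des: "t_design X Bs t v k 1" and "t \<le> k" "B \<in> Bs" "S \<subseteq> B"
  shows "real (card (blocks_meeting Bs B S)) = e_exp v k t (card S)"
proof -
  define U where "U = Bs - {B}"
  define F where "F j = (if j = 0 then 0 else (-1) ^ (j + 1) * (r_num v k t j - 1))" for j
  have finU: "finite U" using t_design_finite_blocks[OF des] by (simp add: U_def)
  have finS: "finite S" using t_design_block(3)[OF des \<open>B \<in> Bs\<close>] \<open>S \<subseteq> B\<close> finite_subset by blast
  txt \<open>\<open>card\<close> is additive only on finite sets, hence the intersection with \<open>U\<close>.\<close>
  have additive: "real (card ((Y \<union> Z) \<inter> U)) = real (card (Y \<inter> U)) + real (card (Z \<inter> U))"
    if "disjnt Y Z" for Y Z
  proof -
    have "(Y \<union> Z) \<inter> U = (Y \<inter> U) \<union> (Z \<inter> U)" "(Y \<inter> U) \<inter> (Z \<inter> U) = {}"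
      using that by (auto simp: disjnt_def)
    then show ?thesis using finU by (simp add: card_Un_disjoint)
  qed
  have "blocks_meeting Bs B S = (\<Union>x\<in>S. {C. x \<in> C}) \<inter> U"
    unfolding blocks_meeting_def U_def by blast
  then have "real (card (blocks_meeting Bs B S))
      = (\<Sum>J | J \<subseteq> S \<and> J \<noteq> {}. (-1) ^ (card J + 1) * real (card ((\<Inter>x\<in>J. {C. x \<in> C}) \<inter> U)))"
    using Incl_Excl_UN[of "\<lambda>Y. real (card (Y \<inter> U))" S "\<lambda>x. {C. x \<in> C}"] additive finS by simp
  also have "\<dots> = (\<Sum>J\<in>Pow S. if J \<noteq> {} then (-1) ^ (card J + 1) * real (card {C\<in>Bs - {B}. J \<subseteq> C}) else 0)"
  proof -
    have "{J. J \<subseteq> S \<and> J \<noteq> {}} = {J\<in>Pow S. J \<noteq> {}}" by blast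
    moreover have "(\<Inter>x\<in>J. {C. x \<in> C}) \<inter> U = {C\<in>Bs - {B}. J \<subseteq> C}" if "J \<noteq> {}" for J
      using that unfolding U_def by blast
    ultimately show ?thesis
      using finS by (simp add: sum.inter_filter[symmetric])
  qed
  also have "\<dots> = (\<Sum>J\<in>Pow S. F (card J))"
  proof (rule sum.cong[OF refl])
    fix J assume "J \<in> Pow S"
    then have "J \<subseteq> B" "card J = 0 \<longleftrightarrow> J = {}"
      using \<open>S \<subseteq> B\<close> finite_subset[OF _ finS] by auto
    then show "(if J \<noteq> {} then (-1) ^ (card J + 1) * real (card {C\<in>Bs - {B}. J \<subseteq> C}) else 0) = F (card J)"
      using card_other_blocks_containing[OF des \<open>t \<le> k\<close> \<open>B \<in> Bs\<close>] by (simp add: F_def)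
  qed
  also have "\<dots> = (\<Sum>j=0..card S. real (card S choose j) * F j)"
    by (rule sum_Pow_card_eq_sum_binomial[OF finS])
  also have "\<dots> = e_exp v k t (card S)"
    unfolding e_exp_def
  proof (rule sum.mono_neutral_cong_right)
    show "\<forall>j\<in>{0..card S} - {1..min (card S) (t - 1)}. real (card S choose j) * F j = 0"
      by (auto simp: F_def r_num_def)
  qed (auto simp: F_def)
  finally show ?thesis .
qed

lemma r_num_one_gt_one:
  assumes "2 \<le> t" "t < k" "k < v"
  shows "r_num v k t 1 > 1"
proof -
  have "(k - 1) choose (t - 1) < k choose (t - 1)"
    using choose_reduce_nat[of k "t - 1"] assms by simp
  also have "\<dots> \<le> (v - 1) choose (t - 1)"
    using assms by (intro binomial_right_mono) auto
  finally show ?thesis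
    using assms unfolding r_num_def by simp
qed

lemma blocks_meeting_nonempty:
  assumes des: "t_design X Bs t v k 1" and "2 \<le> t" "t < k" "k < v" "B \<in> Bs" "S \<subseteq> B" "S \<noteq> {}"
  shows "blocks_meeting Bs B S \<noteq> {}"
proof -
  obtain x where "x \<in> S" using \<open>S \<noteq> {}\<close> by blast
  then have "real (card {C\<in>Bs - {B}. {x} \<subseteq> C}) = r_num v k t 1 - 1"
    using card_other_blocks_containing[OF des less_imp_le[OF \<open>t < k\<close>] \<open>B \<in> Bs\<close>, of "{x}"] \<open>S \<subseteq> B\<close>
    by auto
  then have "card {C\<in>Bs - {B}. {x} \<subseteq> C} \<noteq> 0"
    using r_num_one_gt_one[OF assms(2-4)] by auto
  then have "{C\<in>Bs - {B}. {x} \<subseteq> C} \<noteq> {}"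
    by (metis card.empty)
  then obtain C where "C \<in> Bs - {B}" "x \<in> C" by blast
  with \<open>x \<in> S\<close> show ?thesis unfolding blocks_meeting_def by blast
qed

lemma power_card_blocks_meeting:
  assumes des: "t_design X Bs t v k 1" and "2 \<le> t" "t < k" "k < v" "B \<in> Bs" "S \<subseteq> B" "S \<noteq> {}"
    and "p \<le> 1"
  shows "(1 - p) ^ card (blocks_meeting Bs B S) = (1 - p) powr e_exp v k t (card S)"
proof -
  have "finite (blocks_meeting Bs B S)"
    using t_design_finite_blocks[OF des] unfolding blocks_meeting_def by simp
  then have "card (blocks_meeting Bs B S) \<noteq> 0"
    using blocks_meeting_nonempty[OF assms(1-7)] by simp
  then show ?thesis
    using powr_realpow'[of "1 - p"] card_blocks_meeting[OF des _ \<open>B \<in> Bs\<close> \<open>S \<subseteq> B\<close>] assms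
    by (metis diff_ge_0_iff_ge less_imp_le_nat)
qed

theorem mainTheorem10:
  fixes X :: "'a set" and Bs :: "'a set set" and B :: "'a set"
    and t v k :: nat and p :: real
  assumes "t_design X Bs t v k 1"
    and "2 \<le> t" and "t < k" and "k < v"
    and "B \<in> Bs"
    and "0 \<le> p" and "p \<le> 1"
  shows "reliability Bs B p =
           1 + (\<Sum>i=1..k. (-1) ^ i * real (k choose i) * (1 - p) powr (e_exp v k t i))"
proof -
  note des = assms(1)
  define g where "g i = (if i = 0 then 1 else (-1) ^ i * (1 - p) powr e_exp v k t i)" for i
  have finB: "finite B" and cardB: "card B = k"
    using t_design_block[OF des \<open>B \<in> Bs\<close>] by simp_all
  have "reliability Bs B p = (\<Sum>S\<in>Pow B. (-1) ^ card S * (1 - p) ^ card (blocks_meeting Bs B S))"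
    using reliability_eq_sum_Pow_blocks_meeting[OF t_design_finite_blocks[OF des] finB] .
  also have "\<dots> = (\<Sum>S\<in>Pow B. g (card S))"
  proof (rule sum.cong[OF refl])
    fix S assume "S \<in> Pow B"
    then show "(-1) ^ card S * (1 - p) ^ card (blocks_meeting Bs B S) = g (card S)"
      using power_card_blocks_meeting[OF des assms(2-5), of S p] \<open>p \<le> 1\<close> finite_subset[OF _ finB]
      by (cases "S = {}") (auto simp: g_def blocks_meeting_def)
  qed
  also have "\<dots> = (\<Sum>i=0..k. real (k choose i) * g i)"
    using sum_Pow_card_eq_sum_binomial[OF finB, of g] cardB by simp
  also have "\<dots> = 1 + (\<Sum>i=1..k. (-1) ^ i * real (k choose i) * (1 - p) powr (e_exp v k t i))"
    by (simp add: sum.atLeast_Suc_atMost g_def mult_ac)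
  finally show ?thesis .
qed

end
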